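(* Suppose $(A,W)$ is a Pratt comonoid such that $W$ has cardinality less than the continuum. Say that an element $a\in A$ dominates an equivalence class $E$ of strongly indecomposable elements of $W$ if every member of $W$ containing $a$ contains some member of $E$. Then every $a\in A$ dominates at least one equivalence class of strongly indecomposable elements of $W$. Moreover, if $(A,W)$ is $T_1$ and $a$ dominates an equivalence class $E$, then either $\bigcap_{w\in E}w=\emptyset$ or $\bigcap_{w\in E}w=\{a\}$; and in the latter case, $E$ is the set of all strongly indecomposable elements of $W$ containing $a$, $E$ is the only equivalence class dominated by $a$, and $a$ is the only element of $A$ dominating $E$. Consequently, if $(A,W)$ is $T_1$ and $A$ is infinite, there exists at least one equivalence class $E$ of strongly indecomposable elements of $W$ with $\bigcap_{w\in E}w=\emptyset$.
   Context: A Pratt comonoid is a pair $(A,W)$ where $A$ is a set and $W$ is a set of subsets of $A$ such that (i) $\emptyset\in W$ and $A\in W$; (ii) whenever $C\subseteq A\times A$ is such that for every $a\in A$ both the $a$-th row $\{b\mid (a,b)\in C\}$ and the $a$-th column $\{b\mid (b,a)\in C\}$ belong to $W$, the diagonal $\{b\mid (b,b)\in C\}$ also belongs to $W$. $(A,W)$ is $T_1$ if for all distinct $a,b\in A$ some member of $W$ contains $a$ but not $b$. $W$ is regarded as a meet-semilattice under intersection with least element $\emptyset$. Two elements are disjoint if their intersection is $\emptyset$. A nonempty $x\in W$ is strongly indecomposable if there do not exist two disjoint nonempty elements of $W$ properly contained in $x$. Two strongly indecomposable elements are equivalent if they are not disjoint (this is an equivalence relation on strongly indecomposable elements). *)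

theory Defs
  imports Complex_Main
begin

definition pratt_comonoid :: "'a set \<Rightarrow> 'a set set \<Rightarrow> bool" where
  "pratt_comonoid A W \<longleftrightarrow>
     W \<subseteq> Pow A \<and> {} \<in> W \<and> A \<in> W \<and>
     (\<forall>C. C \<subseteq> A \<times> A \<longrightarrow>
        (\<forall>a\<in>A. {b. (a, b) \<in> C} \<in> W \<and> {b. (b, a) \<in> C} \<in> W) \<longrightarrow>
        {b. (b, b) \<in> C} \<in> W)"

definition pratt_T1 :: "'a set \<Rightarrow> 'a set set \<Rightarrow> bool" where
  "pratt_T1 A W \<longleftrightarrow> (\<forall>a\<in>A. \<forall>b\<in>A. a \<noteq> b \<longrightarrow> (\<exists>w\<in>W. a \<in> w \<and> b \<notin> w))"

definition strongly_indecomposable :: "'a set set \<Rightarrow> 'a set \<Rightarrow> bool" where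
  "strongly_indecomposable W x \<longleftrightarrow> x \<in> W \<and> x \<noteq> {} \<and>
     \<not> (\<exists>y\<in>W. \<exists>z\<in>W. y \<noteq> {} \<and> z \<noteq> {} \<and> y \<inter> z = {} \<and> y \<subset> x \<and> z \<subset> x)"

text \<open>Equivalence classes of strongly indecomposable elements under "not disjoint".\<close>
definition si_class :: "'a set set \<Rightarrow> 'a set set \<Rightarrow> bool" where
  "si_class W E \<longleftrightarrow> (\<exists>x. strongly_indecomposable W x \<and>
     E = {y. strongly_indecomposable W y \<and> x \<inter> y \<noteq> {}})"

definition dominates :: "'a set set \<Rightarrow> 'a \<Rightarrow> 'a set set \<Rightarrow> bool" where
  "dominates W a E \<longleftrightarrow> (\<forall>w\<in>W. a \<in> w \<longrightarrow> (\<exists>e\<in>E. e \<subseteq> w))"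

end

theory Submission
  imports Defs "HOL-Library.Countable" "HOL-Library.Disjoint_Sets"
begin

text \<open>
  By the diagonal axiom applied to \<open>\<Union>n\<in>S. f n \<times> f n\<close>, any union of members of a
  pairwise disjoint sequence \<open>f\<close> of nonempty members of \<open>W\<close> lies in \<open>W\<close>, giving
  \<open>2\<^sup>\<aleph>\<^sup>0\<close> distinct members; so when \<open>|W| < 2\<^sup>\<aleph>\<^sup>0\<close> no such sequence exists.
  This rules out every infinite descent that peels off a disjoint piece at each step.
  Hence every nonempty member of \<open>W\<close> contains a strongly indecomposable one, and every
  point dominates some class: otherwise pick a strongly indecomposable \<open>e \<subseteq> v \<ni> a\<close>,
  shrink \<open>v\<close> to \<open>v \<inter> w\<close> with \<open>a \<in> w\<close> containing no member of the class of \<open>e\<close>, and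
  repeat. Overlap is transitive on strongly indecomposable elements because \<open>y\<close> cannot
  contain the two disjoint pieces \<open>x \<inter> y\<close> and \<open>z \<inter> y\<close>. Under \<open>T\<^sub>1\<close>, separating
  points from \<open>a\<close> shows \<open>\<Inter>E \<subseteq> {a}\<close>; classes with \<open>\<Inter>E = {a}\<close> for infinitely many
  distinct \<open>a\<close> would again give a disjoint sequence.
\<close>

lemma pratt_comonoid_subset: "pratt_comonoid A W \<Longrightarrow> w \<in> W \<Longrightarrow> w \<subseteq> A"
  unfolding pratt_comonoid_def by blast

lemma pratt_comonoid_empty: "pratt_comonoid A W \<Longrightarrow> {} \<in> W"
  unfolding pratt_comonoid_def by blast

lemma pratt_comonoid_carrier: "pratt_comonoid A W \<Longrightarrow> A \<in> W"
  unfolding pratt_comonoid_def by blast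

lemma pratt_comonoid_diagonal:
  assumes "pratt_comonoid A W" and "C \<subseteq> A \<times> A"
    and "\<And>a. a \<in> A \<Longrightarrow> {b. (a, b) \<in> C} \<in> W \<and> {b. (b, a) \<in> C} \<in> W"
  shows "{b. (b, b) \<in> C} \<in> W"
  using assms unfolding pratt_comonoid_def by blast

lemma pratt_comonoid_Int:
  assumes P: "pratt_comonoid A W" and "u \<in> W" and "v \<in> W"
  shows "u \<inter> v \<in> W"
proof -
  have "{b. (b, b) \<in> u \<times> v} \<in> W"
  proof (rule pratt_comonoid_diagonal[OF P])
    show "u \<times> v \<subseteq> A \<times> A"
      using assms pratt_comonoid_subset[OF P] by blast
    fix a
    have "{b. (a, b) \<in> u \<times> v} = (if a \<in> u then v else {})"
      and "{b. (b, a) \<in> u \<times> v} = (if a \<in> v then u else {})" by auto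
    then show "{b. (a, b) \<in> u \<times> v} \<in> W \<and> {b. (b, a) \<in> u \<times> v} \<in> W"
      using assms pratt_comonoid_empty[OF P] by simp
  qed
  moreover have "{b. (b, b) \<in> u \<times> v} = u \<inter> v" by blast
  ultimately show ?thesis by simp
qed

text \<open>The diagonal axiom applied to \<open>\<Union>n\<in>S. f n \<times> f n\<close>: each row and column is
  either empty or the unique \<open>f n\<close> through that point.\<close>
lemma pratt_comonoid_Union_disjoint_family:
  assumes P: "pratt_comonoid A W" and f: "f ` I \<subseteq> W"
    and disj: "disjoint_family_on f I" and "S \<subseteq> I"
  shows "\<Union>(f ` S) \<in> W"
proof -
  define C where "C = (\<Union>n\<in>S. f n \<times> f n)"
  have unique: "m = n" if "m \<in> S" "n \<in> S" "a \<in> f m" "a \<in> f n" for a m n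
    using disj \<open>S \<subseteq> I\<close> that unfolding disjoint_family_on_def by blast
  have "{b. (b, b) \<in> C} \<in> W"
  proof (rule pratt_comonoid_diagonal[OF P])
    show "C \<subseteq> A \<times> A"
      unfolding C_def using f \<open>S \<subseteq> I\<close> pratt_comonoid_subset[OF P] by blast
    fix a
    show "{b. (a, b) \<in> C} \<in> W \<and> {b. (b, a) \<in> C} \<in> W"
    proof (cases "\<exists>n\<in>S. a \<in> f n")
      case True
      then obtain n where "n \<in> S" "a \<in> f n" by blast
      then have "{b. (a, b) \<in> C} = f n" and "{b. (b, a) \<in> C} = f n"
        unfolding C_def using unique by blast+
      moreover have "f n \<in> W" using f \<open>n \<in> S\<close> \<open>S \<subseteq> I\<close> by blast
      ultimately show ?thesis by simp
    next
      case False
      then have "{b. (a, b) \<in> C} = {}" and "{b. (b, a) \<in> C} = {}"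
        unfolding C_def by blast+
      then show ?thesis using pratt_comonoid_empty[OF P] by simp
    qed
  qed
  moreover have "{b. (b, b) \<in> C} = \<Union>(f ` S)"
    unfolding C_def by blast
  ultimately show ?thesis by simp
qed

lemma inj_on_Union_disjoint_family:
  assumes disj: "disjoint_family_on f I" and nonempty: "\<And>n. n \<in> I \<Longrightarrow> f n \<noteq> {}"
  shows "inj_on (\<lambda>S. \<Union>(f ` S)) (Pow I)"
proof -
  have "n \<in> T" if "S \<subseteq> I" "T \<subseteq> I" "\<Union>(f ` S) = \<Union>(f ` T)" "n \<in> S" for S T n
  proof -
    note ST = that
    obtain c where c: "c \<in> f n" using nonempty ST by blast
    then obtain m where "m \<in> T" "c \<in> f m" using ST by blast
    then have "m = n" using disj ST c unfolding disjoint_family_on_def by blast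
    then show ?thesis using \<open>m \<in> T\<close> by simp
  qed
  then show ?thesis
    by (intro inj_onI) (metis PowD subsetI subset_antisym)
qed

lemma inj_rat_cut: "inj (\<lambda>r::real. {q::rat. of_rat q < r})"
proof (rule injI)
  fix r s :: real assume eq: "{q. of_rat q < r} = {q. of_rat q < s}"
  have False if "x < y" "{q::rat. of_rat q < x} = {q. of_rat q < y}" for x y :: real
  proof -
    obtain q where "x < of_rat q" "of_rat q < y" using of_rat_dense \<open>x < y\<close> by blast
    then show False using that(2) by (metis less_asym mem_Collect_eq)
  qed
  then show "r = s" using eq by (metis linorder_neqE)
qed

lemma card_of_real_le_Pow_nat:
  "(card_of (UNIV :: real set), card_of (UNIV :: nat set set)) \<in> ordLeq"
proof -
  have "inj (\<lambda>r::real. to_nat ` {q::rat. of_rat q < r})"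
    using inj_rat_cut by (simp add: inj_def inj_image_eq_iff[OF inj_to_nat])
  then show ?thesis by (rule card_of_ordLeqI) simp
qed

lemma pratt_comonoid_no_disjoint_sequence:
  fixes f :: "nat \<Rightarrow> 'a set"
  assumes P: "pratt_comonoid A W"
    and small: "(card_of W, card_of (UNIV :: real set)) \<in> ordLess"
    and "range f \<subseteq> W" and "\<And>n. f n \<noteq> {}" and "disjoint_family f"
  shows False
proof -
  have "(card_of (UNIV :: nat set set), card_of W) \<in> ordLeq"
    using inj_on_Union_disjoint_family[of f UNIV] pratt_comonoid_Union_disjoint_family[OF P]
      assms(3-5) by (intro card_of_ordLeqI) auto
  then have "(card_of (UNIV :: real set), card_of W) \<in> ordLeq"
    using card_of_real_le_Pow_nat ordLeq_transitive by blast
  then show False using small not_ordLess_ordLeq by blast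
qed

lemma disjoint_family_from_descent:
  assumes step: "\<And>v. R v \<Longrightarrow> \<exists>v' z. R v' \<and> v' \<subseteq> v \<and> z \<subseteq> v \<and> Q z \<and>
      (\<forall>z'. Q z' \<and> z' \<subseteq> v' \<longrightarrow> z \<inter> z' = {})"
    and "R v\<^sub>0"
  shows "\<exists>z :: nat \<Rightarrow> _. (\<forall>n. Q (z n)) \<and> disjoint_family z"
proof -
  obtain shrink piece where sp: "\<And>v. R v \<Longrightarrow> R (shrink v) \<and> shrink v \<subseteq> v \<and> piece v \<subseteq> v \<and>
      Q (piece v) \<and> (\<forall>z'. Q z' \<and> z' \<subseteq> shrink v \<longrightarrow> piece v \<inter> z' = {})"
    using step by metis
  define v where "v n = (shrink ^^ n) v\<^sub>0" for n
  have v_Suc: "v (Suc n) = shrink (v n)" for n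
    unfolding v_def by simp
  have R: "R (v n)" for n
    by (induction n) (use \<open>R v\<^sub>0\<close> sp v_Suc v_def in auto)
  have v_decreasing: "v m \<subseteq> v n" if "n \<le> m" for m n
    using that
  proof (induction m rule: dec_induct)
    case (step m)
    then show ?case using sp[OF R[of m]] v_Suc[of m] by blast
  qed simp
  have disjoint: "piece (v n) \<inter> piece (v m) = {}" if "n < m" for m n
  proof -
    have "piece (v m) \<subseteq> shrink (v n)"
      using sp[OF R[of m]] v_decreasing[of "Suc n" m] v_Suc[of n] \<open>n < m\<close> by auto
    moreover have "Q (piece (v m))"
      using sp[OF R[of m]] by blast
    ultimately show ?thesis
      using sp[OF R[of n]] by blast
  qed
  show ?thesis
  proof (intro exI conjI allI)
    show "Q (piece (v n))" for n
      using sp[OF R[of n]] by blast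
    show "disjoint_family (\<lambda>n. piece (v n))"
      unfolding disjoint_family_on_def
    proof (intro ballI impI)
      fix m n :: nat assume "m \<noteq> n"
      then consider "m < n" | "n < m" by linarith
      then show "piece (v m) \<inter> piece (v n) = {}"
        by cases (use disjoint in \<open>auto simp: Int_commute\<close>)
    qed
  qed
qed

lemma pratt_comonoid_no_disjoint_descent:
  assumes P: "pratt_comonoid A W"
    and small: "(card_of W, card_of (UNIV :: real set)) \<in> ordLess"
    and Q: "\<And>z. Q z \<Longrightarrow> z \<in> W \<and> z \<noteq> {}"
    and step: "\<And>v. R v \<Longrightarrow> \<exists>v' z. R v' \<and> v' \<subseteq> v \<and> z \<subseteq> v \<and> Q z \<and>
      (\<forall>z'. Q z' \<and> z' \<subseteq> v' \<longrightarrow> z \<inter> z' = {})"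
    and "R v\<^sub>0"
  shows False
proof -
  obtain z :: "nat \<Rightarrow> _" where z: "\<And>n. Q (z n)" and "disjoint_family z"
    using disjoint_family_from_descent[of R Q, OF step \<open>R v\<^sub>0\<close>] by blast
  have "range z \<subseteq> W" and "\<And>n. z n \<noteq> {}"
    using Q z by auto
  then show False
    using \<open>disjoint_family z\<close> by (rule pratt_comonoid_no_disjoint_sequence[OF P small])
qed

lemma strongly_indecomposableD:
  assumes "strongly_indecomposable W x"
  shows "x \<in> W" and "x \<noteq> {}"
    and "\<And>y z. y \<in> W \<Longrightarrow> z \<in> W \<Longrightarrow> y \<noteq> {} \<Longrightarrow> z \<noteq> {} \<Longrightarrow> y \<inter> z = {} \<Longrightarrow>
      y \<subset> x \<Longrightarrow> z \<subset> x \<Longrightarrow> False"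
  using assms unfolding strongly_indecomposable_def by blast+

lemma pratt_comonoid_strongly_indecomposable_below:
  assumes P: "pratt_comonoid A W"
    and small: "(card_of W, card_of (UNIV :: real set)) \<in> ordLess"
    and "w \<in> W" and "w \<noteq> {}"
  shows "\<exists>e. strongly_indecomposable W e \<and> e \<subseteq> w"
proof (rule ccontr)
  define R where "R v \<longleftrightarrow> v \<in> W \<and> v \<noteq> {} \<and> \<not> (\<exists>e. strongly_indecomposable W e \<and> e \<subseteq> v)"
    for v
  assume "\<not> ?thesis"
  then have "R w" using assms unfolding R_def by blast
  show False
  proof (rule pratt_comonoid_no_disjoint_descent[OF P small, of "\<lambda>z. z \<in> W \<and> z \<noteq> {}" R])
    fix v assume "R v"
    then have "\<not> strongly_indecomposable W v" and "v \<in> W" "v \<noteq> {}"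
      unfolding R_def by blast+
    then obtain y z where yz: "y \<in> W" "z \<in> W" "y \<noteq> {}" "z \<noteq> {}" "y \<inter> z = {}"
      and "y \<subset> v" "z \<subset> v"
      unfolding strongly_indecomposable_def by blast
    then have "y \<subseteq> v" "z \<subseteq> v" by auto
    have "R y"
      using \<open>R v\<close> \<open>y \<subseteq> v\<close> yz unfolding R_def by (meson order_trans)
    moreover have "\<forall>z'. (z' \<in> W \<and> z' \<noteq> {}) \<and> z' \<subseteq> y \<longrightarrow> z \<inter> z' = {}"
      using \<open>y \<inter> z = {}\<close> by blast
    ultimately show "\<exists>v' z. R v' \<and> v' \<subseteq> v \<and> z \<subseteq> v \<and> (z \<in> W \<and> z \<noteq> {}) \<and>
        (\<forall>z'. (z' \<in> W \<and> z' \<noteq> {}) \<and> z' \<subseteq> v' \<longrightarrow> z \<inter> z' = {})"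
      using yz \<open>y \<subseteq> v\<close> \<open>z \<subseteq> v\<close> by (intro exI[of _ y] exI[of _ z]) simp
  qed (use \<open>R w\<close> in simp_all)
qed

lemma strongly_indecomposable_overlap_trans:
  assumes P: "pratt_comonoid A W"
    and x: "strongly_indecomposable W x" and y: "strongly_indecomposable W y"
    and z: "strongly_indecomposable W z"
    and xy: "x \<inter> y \<noteq> {}" and yz: "y \<inter> z \<noteq> {}"
  shows "x \<inter> z \<noteq> {}"
proof
  assume xz: "x \<inter> z = {}"
  have "x \<inter> y \<in> W" and "z \<inter> y \<in> W"
    using pratt_comonoid_Int[OF P] strongly_indecomposableD(1) x y z by blast+
  moreover have "x \<inter> y \<noteq> {}" and "z \<inter> y \<noteq> {}" and "(x \<inter> y) \<inter> (z \<inter> y) = {}"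
    using xy yz xz by blast+
  moreover have "x \<inter> y \<subset> y" and "z \<inter> y \<subset> y"
    using xy yz xz by blast+
  ultimately show False
    by (rule strongly_indecomposableD(3)[OF y])
qed

definition si_class_of :: "'a set set \<Rightarrow> 'a set \<Rightarrow> 'a set set" where
  "si_class_of W x = {y. strongly_indecomposable W y \<and> x \<inter> y \<noteq> {}}"

lemma si_class_iff: "si_class W E \<longleftrightarrow> (\<exists>x. strongly_indecomposable W x \<and> E = si_class_of W x)"
  unfolding si_class_def si_class_of_def ..

lemma mem_si_class_of: "strongly_indecomposable W x \<Longrightarrow> x \<in> si_class_of W x"
  unfolding si_class_of_def using strongly_indecomposableD(2) by blast

lemma strongly_indecomposable_of_mem_si_class_of:
  "e \<in> si_class_of W x \<Longrightarrow> strongly_indecomposable W e"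
  unfolding si_class_of_def by simp

lemma si_class_of_eq:
  assumes P: "pratt_comonoid A W"
    and x: "strongly_indecomposable W x" and y: "strongly_indecomposable W y"
    and "x \<inter> y \<noteq> {}"
  shows "si_class_of W x = si_class_of W y"
proof -
  have "y \<inter> x \<noteq> {}" using \<open>x \<inter> y \<noteq> {}\<close> by blast
  then show ?thesis
    unfolding si_class_of_def
    using strongly_indecomposable_overlap_trans[OF P y x _ \<open>y \<inter> x \<noteq> {}\<close>]
      strongly_indecomposable_overlap_trans[OF P x y _ \<open>x \<inter> y \<noteq> {}\<close>]
    by blast
qed

lemma si_class_eq_si_class_of:
  assumes P: "pratt_comonoid A W" and "si_class W E" and "e \<in> E"
  shows "E = si_class_of W e"
proof -
  obtain x where x: "strongly_indecomposable W x" and E: "E = si_class_of W x"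
    using \<open>si_class W E\<close> unfolding si_class_iff by blast
  then have "strongly_indecomposable W e" and "x \<inter> e \<noteq> {}"
    using \<open>e \<in> E\<close> unfolding si_class_of_def by simp_all
  then show ?thesis
    using si_class_of_eq[OF P x] E by simp
qed

lemma si_class_eqI:
  assumes P: "pratt_comonoid A W" and "si_class W E" and "si_class W E'"
    and "e \<in> E" and "e' \<in> E'" and "e \<inter> e' \<noteq> {}"
  shows "E = E'"
proof -
  have E: "E = si_class_of W e" and E': "E' = si_class_of W e'"
    using si_class_eq_si_class_of[OF P] assms(2-5) by blast+
  then have "strongly_indecomposable W e" and "strongly_indecomposable W e'"
    using assms(4,5) strongly_indecomposable_of_mem_si_class_of by blast+
  then show ?thesis
    using si_class_of_eq[OF P _ _ \<open>e \<inter> e' \<noteq> {}\<close>] E E' by simp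
qed

lemma si_class_memD:
  assumes "si_class W E" and "e \<in> E"
  shows "strongly_indecomposable W e"
  using assms unfolding si_class_iff by (auto dest: strongly_indecomposable_of_mem_si_class_of)

lemma si_class_nonempty: "si_class W E \<Longrightarrow> E \<noteq> {}"
  unfolding si_class_iff using mem_si_class_of by blast

lemma pratt_comonoid_dominates_some_si_class:
  assumes P: "pratt_comonoid A W"
    and small: "(card_of W, card_of (UNIV :: real set)) \<in> ordLess"
    and "a \<in> A"
  shows "\<exists>E. si_class W E \<and> dominates W a E"
proof (rule ccontr)
  assume none: "\<not> ?thesis"
  show False
  proof (rule pratt_comonoid_no_disjoint_descent[OF P small,
        of "strongly_indecomposable W" "\<lambda>v. v \<in> W \<and> a \<in> v"])
    fix v assume v: "v \<in> W \<and> a \<in> v"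
    then obtain e where e: "strongly_indecomposable W e" "e \<subseteq> v"
      using pratt_comonoid_strongly_indecomposable_below[OF P small] by blast
    then have "\<not> dominates W a (si_class_of W e)"
      using none si_class_iff by blast
    then obtain w where w: "w \<in> W" "a \<in> w" and avoid: "\<And>y. y \<in> si_class_of W e \<Longrightarrow> \<not> y \<subseteq> w"
      unfolding dominates_def by blast
    have "v \<inter> w \<in> W"
      using pratt_comonoid_Int[OF P] v w by blast
    moreover have "e \<inter> z' = {}" if "strongly_indecomposable W z'" "z' \<subseteq> v \<inter> w" for z'
      using avoid[of z'] that unfolding si_class_of_def by blast
    ultimately show "\<exists>v' z. (v' \<in> W \<and> a \<in> v') \<and> v' \<subseteq> v \<and> z \<subseteq> v \<and>
        strongly_indecomposable W z \<and>
        (\<forall>z'. strongly_indecomposable W z' \<and> z' \<subseteq> v' \<longrightarrow> z \<inter> z' = {})"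
      using v w e by (intro exI[of _ "v \<inter> w"] exI[of _ e]) simp
  qed (use strongly_indecomposableD pratt_comonoid_carrier[OF P] \<open>a \<in> A\<close> in auto)
qed

lemma pratt_T1D:
  "pratt_T1 A W \<Longrightarrow> a \<in> A \<Longrightarrow> b \<in> A \<Longrightarrow> a \<noteq> b \<Longrightarrow> \<exists>w\<in>W. a \<in> w \<and> b \<notin> w"
  unfolding pratt_T1_def by blast

lemma dominatesD: "dominates W a E \<Longrightarrow> w \<in> W \<Longrightarrow> a \<in> w \<Longrightarrow> \<exists>e\<in>E. e \<subseteq> w"
  unfolding dominates_def by blast

lemma Inter_dominated_si_class_subset:
  assumes P: "pratt_comonoid A W" and T: "pratt_T1 A W" and "a \<in> A"
    and E: "si_class W E" and dom: "dominates W a E"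
  shows "\<Inter>E \<subseteq> {a}"
proof
  fix b assume b: "b \<in> \<Inter>E"
  obtain e where "e \<in> E" using si_class_nonempty[OF E] by blast
  then have "b \<in> e" and "e \<subseteq> A"
    using b pratt_comonoid_subset[OF P] strongly_indecomposableD(1) si_class_memD[OF E] by blast+
  then have "b \<in> A" by blast
  show "b \<in> {a}"
  proof (rule ccontr)
    assume "b \<notin> {a}"
    then obtain w where "w \<in> W" "a \<in> w" "b \<notin> w"
      using pratt_T1D[OF T \<open>a \<in> A\<close> \<open>b \<in> A\<close>] by auto
    then obtain e' where "e' \<in> E" "e' \<subseteq> w"
      using dominatesD[OF dom] by blast
    then show False using b \<open>b \<notin> w\<close> by blast
  qed
qed

lemma si_class_eq_containing_point:
  assumes P: "pratt_comonoid A W" and E: "si_class W E" and I: "\<Inter>E = {a}"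
  shows "E = {w. strongly_indecomposable W w \<and> a \<in> w}"
proof (intro equalityI subsetI CollectI conjI)
  fix w assume "w \<in> E"
  then show "strongly_indecomposable W w" and "a \<in> w"
    using si_class_memD[OF E] I by auto
next
  obtain e where "e \<in> E" using si_class_nonempty[OF E] by blast
  then have "a \<in> e" using I by auto
  fix w assume "w \<in> {w. strongly_indecomposable W w \<and> a \<in> w}"
  then have "w \<in> si_class_of W e"
    using \<open>a \<in> e\<close> unfolding si_class_of_def by blast
  then show "w \<in> E"
    using si_class_eq_si_class_of[OF P E \<open>e \<in> E\<close>] by simp
qed

lemma dominated_si_class_unique:
  assumes P: "pratt_comonoid A W" and E: "si_class W E" and I: "\<Inter>E = {a}"
    and E': "si_class W E'" and dom: "dominates W a E'"
  shows "E' = E"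
proof -
  obtain x where "x \<in> E" using si_class_nonempty[OF E] by blast
  then have "x \<in> W" and "a \<in> x"
    using si_class_memD[OF E] strongly_indecomposableD(1) I by auto
  then obtain e' where "e' \<in> E'" and "e' \<subseteq> x"
    using dominatesD[OF dom] by blast
  moreover have "e' \<noteq> {}"
    using si_class_memD[OF E' \<open>e' \<in> E'\<close>] strongly_indecomposableD(2) by blast
  ultimately have "e' \<inter> x \<noteq> {}" by blast
  then show ?thesis
    using si_class_eqI[OF P E' E \<open>e' \<in> E'\<close> \<open>x \<in> E\<close>] by blast
qed

lemma dominating_point_unique:
  assumes T: "pratt_T1 A W" and "a \<in> A" and "b \<in> A"
    and I: "\<Inter>E = {a}" and dom: "dominates W b E"
  shows "b = a"
proof (rule ccontr)
  assume "b \<noteq> a"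
  then obtain w where "w \<in> W" "b \<in> w" "a \<notin> w"
    using pratt_T1D[OF T \<open>b \<in> A\<close> \<open>a \<in> A\<close>] by blast
  then obtain e where "e \<in> E" "e \<subseteq> w"
    using dominatesD[OF dom] by blast
  then show False using I \<open>a \<notin> w\<close> by blast
qed

lemma si_class_members_disjoint:
  assumes P: "pratt_comonoid A W" and "si_class W E" and "si_class W E'"
    and "\<Inter>E \<noteq> \<Inter>E'" and "e \<in> E" and "e' \<in> E'"
  shows "e \<inter> e' = {}"
  using si_class_eqI[OF P] assms(2-6) by blast

lemma exists_si_class_Inter_empty:
  assumes P: "pratt_comonoid A W"
    and small: "(card_of W, card_of (UNIV :: real set)) \<in> ordLess"
    and T: "pratt_T1 A W" and "infinite A"
  shows "\<exists>E. si_class W E \<and> \<Inter>E = {}"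
proof (rule ccontr)
  assume none: "\<not> ?thesis"
  have "\<exists>E x. si_class W E \<and> \<Inter>E = {a} \<and> x \<in> E" if a: "a \<in> A" for a
  proof -
    obtain E where E: "si_class W E" "dominates W a E"
      using pratt_comonoid_dominates_some_si_class[OF P small a] by blast
    then have "\<Inter>E = {a}"
      using Inter_dominated_si_class_subset[OF P T a] none by (auto simp: subset_singleton_iff)
    then show ?thesis using E si_class_nonempty by blast
  qed
  then obtain cls rep where cls: "\<And>a. a \<in> A \<Longrightarrow> si_class W (cls a) \<and> \<Inter>(cls a) = {a} \<and> rep a \<in> cls a"
    by metis
  obtain h :: "nat \<Rightarrow> 'a" where "inj h" and "range h \<subseteq> A"
    using infinite_countable_subset[OF \<open>infinite A\<close>] by blast
  then have hA: "h n \<in> A" for n by blast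
  have si: "strongly_indecomposable W (rep (h n))" for n
    using cls[OF hA] si_class_memD by blast
  show False
  proof (rule pratt_comonoid_no_disjoint_sequence[OF P small, of "rep \<circ> h"])
    show "range (rep \<circ> h) \<subseteq> W" and "(rep \<circ> h) n \<noteq> {}" for n
      using strongly_indecomposableD(1,2)[OF si] by auto
    show "disjoint_family (rep \<circ> h)"
      unfolding disjoint_family_on_def
    proof (intro ballI impI)
      fix m n :: nat assume "m \<noteq> n"
      then have "h m \<noteq> h n" using \<open>inj h\<close> by (simp add: inj_eq)
      then show "(rep \<circ> h) m \<inter> (rep \<circ> h) n = {}"
        using si_class_members_disjoint[OF P] cls[OF hA] by (metis comp_apply singleton_inject)
    qed
  qed
qed

theorem lemma8p4:
  fixes A :: "'a set" and W :: "'a set set"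
  assumes "pratt_comonoid A W"
    and "(card_of W, card_of (UNIV :: real set)) \<in> ordLess"
  shows "(\<forall>a\<in>A. \<exists>E. si_class W E \<and> dominates W a E)
    \<and> (pratt_T1 A W \<longrightarrow>
         (\<forall>a\<in>A. \<forall>E. si_class W E \<and> dominates W a E \<longrightarrow>
            (\<Inter>E = {} \<or> \<Inter>E = {a}) \<and>
            (\<Inter>E = {a} \<longrightarrow>
               E = {w. strongly_indecomposable W w \<and> a \<in> w} \<and>
               (\<forall>E'. si_class W E' \<and> dominates W a E' \<longrightarrow> E' = E) \<and>
               (\<forall>b\<in>A. dominates W b E \<longrightarrow> b = a))))
    \<and> (pratt_T1 A W \<and> infinite A \<longrightarrow> (\<exists>E. si_class W E \<and> \<Inter>E = {}))"
  using pratt_comonoid_dominates_some_si_class[OF assms]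
    Inter_dominated_si_class_subset[OF assms(1)]
    si_class_eq_containing_point[OF assms(1)]
    dominated_si_class_unique[OF assms(1)]
    dominating_point_unique
    exists_si_class_Inter_empty[OF assms]
  by (auto simp: subset_singleton_iff)

end
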